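(* Let $E$ be a nonzero real Banach space and let $f\colon E\to\,]{-}\infty,\infty]$ be proper, convex and lower semicontinuous. Then the subdifferential $\partial f\colon E\rightrightarrows E^*$ is closed, monotone and quasidense.
   Context: $E^*$ is the dual of $E$ with pairing $\langle x,x^*\rangle$. The Fenchel conjugate is $f^*(x^* )=\sup_{x\in E}[\langle x,x^*\rangle-f(x)]$, and $x^*\in\partial f(x)$ iff $f(x)+f^*(x^* )=\langle x,x^*\rangle$. For a multifunction $S\colon E\rightrightarrows E^*$ with nonempty graph $G(S)\subset E\times E^*$: $S$ is closed if $G(S)$ is norm-closed in $E\times E^*$; monotone if $\langle s-t,s^*-t^*\rangle\ge0$ for all $(s,s^* ),(t,t^* )\in G(S)$; quasidense if for every $(x,x^* )\in E\times E^*$, $\inf_{(s,s^* )\in G(S)}\big[\tfrac12\|s-x\|^2+\tfrac12\|s^*-x^*\|^2+\langle s-x,s^*-x^*\rangle\big]\le 0$. *)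

theory Defs
  imports "HOL-Analysis.Analysis"
begin

text \<open>The dual space of a real normed space E is the type E \<Rightarrow>L real of bounded
  linear functionals (with the operator norm); the pairing is blinfun_apply.
  Extended-real-valued functions f : E \<rightarrow> ]-\<infinity>,\<infinity>] are modelled as
  E \<Rightarrow> ereal never taking the value -\<infinity>.\<close>

definition proper_fun :: "('a \<Rightarrow> ereal) \<Rightarrow> bool" where
  "proper_fun f \<longleftrightarrow> (\<forall>x. f x \<noteq> -\<infinity>) \<and> (\<exists>x. f x \<noteq> \<infinity>)"

definition convex_fun :: "('a::real_vector \<Rightarrow> ereal) \<Rightarrow> bool" where
  "convex_fun f \<longleftrightarrow> (\<forall>x y t. 0 < t \<and> t < 1 \<longrightarrow>
      f ((1 - t) *\<^sub>R x + t *\<^sub>R y) \<le> ereal (1 - t) * f x + ereal t * f y)"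

definition lsc_fun :: "('a::topological_space \<Rightarrow> ereal) \<Rightarrow> bool" where
  "lsc_fun f \<longleftrightarrow> (\<forall>x c. c < f x \<longrightarrow> eventually (\<lambda>y. c < f y) (nhds x))"

definition fenchel_conj :: "('a::real_normed_vector \<Rightarrow> ereal) \<Rightarrow> ('a \<Rightarrow>\<^sub>L real) \<Rightarrow> ereal" where
  "fenchel_conj f xs = (SUP x. ereal (blinfun_apply xs x) - f x)"

definition subdiff :: "('a::real_normed_vector \<Rightarrow> ereal) \<Rightarrow> 'a \<Rightarrow> ('a \<Rightarrow>\<^sub>L real) set" where
  "subdiff f x = {xs. f x + fenchel_conj f xs = ereal (blinfun_apply xs x)}"

definition graph_mf :: "('a \<Rightarrow> 'b set) \<Rightarrow> ('a \<times> 'b) set" where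
  "graph_mf S = {(x, xs). xs \<in> S x}"

definition closed_mf :: "('a::real_normed_vector \<Rightarrow> ('a \<Rightarrow>\<^sub>L real) set) \<Rightarrow> bool" where
  "closed_mf S \<longleftrightarrow> closed (graph_mf S)"

definition monotone_mf :: "('a::real_normed_vector \<Rightarrow> ('a \<Rightarrow>\<^sub>L real) set) \<Rightarrow> bool" where
  "monotone_mf S \<longleftrightarrow> (\<forall>(s, ss) \<in> graph_mf S. \<forall>(t, ts) \<in> graph_mf S.
      blinfun_apply (ss - ts) (s - t) \<ge> 0)"

text \<open>Quasidensity; the infimum is taken in the extended reals, so an empty graph
  (infimum +\<infinity>) is never quasidense.\<close>
definition quasidense_mf :: "('a::real_normed_vector \<Rightarrow> ('a \<Rightarrow>\<^sub>L real) set) \<Rightarrow> bool" where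
  "quasidense_mf S \<longleftrightarrow> (\<forall>x xs.
      (INF p \<in> graph_mf S. ereal (norm (fst p - x) ^ 2 / 2 + norm (snd p - xs) ^ 2 / 2
          + blinfun_apply (snd p - xs) (fst p - x))) \<le> 0)"

end

theory Submission
  imports Defs
begin

text \<open>Closedness of the subdifferential follows by passing to the limit in the subgradient inequality,
  using lower semicontinuity, and monotonicity by adding the subgradient inequalities at two points.
  For quasidensity at \<open>(x, x\<^sup>*)\<close>, the function \<open>f + \<parallel>\<cdot> - x\<parallel>\<^sup>2/2 - x\<^sup>*\<close> is lower semicontinuous and
  coercive (an affine minorant of \<open>f\<close> exists by the sandwich theorem), so Ekeland's principle yields
  an \<open>e\<close>-minimiser \<open>s\<close>. The sandwich theorem, applied to \<open>f\<close> and the convex function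
  \<open>\<parallel>\<cdot> - x\<parallel>\<^sup>2/2 - x\<^sup>* + e\<parallel>\<cdot> - s\<parallel>\<close>, produces \<open>s\<^sup>* \<in> \<partial>f(s)\<close> for which \<open>s\<close> minimises
  \<open>\<parallel>\<cdot> - x\<parallel>\<^sup>2/2 + e\<parallel>\<cdot> - s\<parallel> + \<langle>\<cdot> - s, s\<^sup>* - x\<^sup>*\<rangle>\<close>; this forces the quasidensity expression
  at \<open>(s, s\<^sup>*)\<close> to be \<open>O(e)\<close>. The sandwich theorem itself is reduced to the Hahn--Banach
  domination of a linear functional by a sublinear one, obtained from a minimal sublinear
  functional via Zorn's lemma.\<close>

section \<open>Sublinear functionals and the Hahn--Banach theorem\<close>

definition sublinear :: "('a::real_vector \<Rightarrow> real) \<Rightarrow> bool" where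
  "sublinear q \<longleftrightarrow> (\<forall>x y. q (x + y) \<le> q x + q y) \<and> (\<forall>c x. c \<ge> 0 \<longrightarrow> q (c *\<^sub>R x) = c * q x)"

lemma sublinear_add_le: "sublinear q \<Longrightarrow> q (x + y) \<le> q x + q y"
  unfolding sublinear_def by blast

lemma sublinear_scaleR: "sublinear q \<Longrightarrow> c \<ge> 0 \<Longrightarrow> q (c *\<^sub>R x) = c * q x"
  unfolding sublinear_def by blast

lemma sublinear_zero: "sublinear q \<Longrightarrow> q 0 = 0"
  using sublinear_scaleR[of q 0 0] by simp

lemma sublinear_neg_le: "sublinear q \<Longrightarrow> - q (- x) \<le> q x"
  using sublinear_add_le[of q x "- x"] sublinear_zero[of q] by simp

lemma sublinear_iff_pos_scaleR:
  "sublinear q \<longleftrightarrow> (\<forall>x y. q (x + y) \<le> q x + q y) \<and> q 0 = 0 \<and> (\<forall>c x. c > 0 \<longrightarrow> q (c *\<^sub>R x) = c * q x)"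
  unfolding sublinear_def by (metis order.order_iff_strict scaleR_zero_left mult_zero_left)

lemma sublinear_Inf_chain:
  fixes C :: "('a::real_vector \<Rightarrow> real) set"
  assumes ne: "C \<noteq> {}" and sub: "\<And>q. q \<in> C \<Longrightarrow> sublinear q \<and> q \<le> p"
    and chain: "\<And>a b. a \<in> C \<Longrightarrow> b \<in> C \<Longrightarrow> a \<le> b \<or> b \<le> a"
  shows "sublinear (\<lambda>x. INF q\<in>C. q x)" and "q \<in> C \<Longrightarrow> (\<lambda>x. INF q\<in>C. q x) \<le> q"
proof -
  define u where "u x = (INF q\<in>C. q x)" for x
  have bdd: "bdd_below ((\<lambda>q. q x) ` C)" for x
  proof (rule bdd_belowI[where m = "- p (- x)"])
    fix y assume "y \<in> (\<lambda>q. q x) ` C"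
    then obtain q where q: "q \<in> C" "y = q x" by auto
    then show "- p (- x) \<le> y" using sub[OF q(1)] sublinear_neg_le[of q x] le_funD[of q p "- x"] by auto
  qed
  have low: "u x \<le> q x" if "q \<in> C" for q x
    unfolding u_def using that bdd by (auto intro: cInf_lower)
  then show "q \<in> C \<Longrightarrow> (\<lambda>x. INF q\<in>C. q x) \<le> q" unfolding u_def by (simp add: le_fun_def)
  have gr: "a \<le> u x" if "\<And>q. q \<in> C \<Longrightarrow> a \<le> q x" for a x
    unfolding u_def using that ne by (auto intro: cINF_greatest)
  have add: "u (x + y) \<le> u x + u y" for x y
  proof -
    have "u (x + y) - q2 y \<le> u x" if q2: "q2 \<in> C" for q2
    proof (rule gr)
      fix q1 assume q1: "q1 \<in> C"
      define q where "q = (if q1 \<le> q2 then q1 else q2)"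
      have q: "q \<in> C" "q \<le> q1" "q \<le> q2" using q1 q2 chain[OF q1 q2] unfolding q_def by auto
      have "u (x + y) \<le> q (x + y)" using low[OF q(1)] .
      also have "\<dots> \<le> q x + q y" using sub[OF q(1)] by (simp add: sublinear_add_le)
      finally have "u (x + y) \<le> q x + q y" .
      then show "u (x + y) - q2 y \<le> q1 x" using le_funD[OF q(2), of x] le_funD[OF q(3), of y] by simp
    qed
    then have "u (x + y) - u x \<le> u y" by (intro gr) (simp add: algebra_simps)
    then show ?thesis by simp
  qed
  have "u 0 = 0"
  proof (rule antisym)
    obtain q where "q \<in> C" using ne by auto
    then show "u 0 \<le> 0" using low[of q 0] sub sublinear_zero by fastforce
    show "0 \<le> u 0" by (rule gr) (simp add: sub sublinear_zero)
  qed
  moreover have "u (c *\<^sub>R x) = c * u x" if c: "c > 0" for c x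
  proof (rule antisym)
    have e: "\<And>q. q \<in> C \<Longrightarrow> q (c *\<^sub>R x) = c * q x" using sub c by (simp add: sublinear_scaleR)
    have "u (c *\<^sub>R x) / c \<le> u x"
      by (rule gr) (use c low e in \<open>fastforce simp: field_simps\<close>)
    then show "u (c *\<^sub>R x) \<le> c * u x" using c by (simp add: field_simps)
    show "c * u x \<le> u (c *\<^sub>R x)"
    proof (rule gr)
      fix q assume q: "q \<in> C"
      show "c * u x \<le> q (c *\<^sub>R x)" using low[OF q, of x] e[OF q] c by (simp add: mult_left_mono)
    qed
  qed
  ultimately show "sublinear (\<lambda>x. INF q\<in>C. q x)"
    unfolding sublinear_iff_pos_scaleR u_def[symmetric] using add by blast
qed

lemma sublinear_minimal_below:
  fixes p :: "'a::real_vector \<Rightarrow> real"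
  assumes "sublinear p"
  shows "\<exists>m. sublinear m \<and> m \<le> p \<and> (\<forall>q. sublinear q \<and> q \<le> m \<longrightarrow> q = m)"
proof -
  define A where "A = {q. sublinear q \<and> q \<le> p}"
  define P where "P = (\<lambda>a b::'a \<Rightarrow> real. b \<le> a)"
  have po: "partial_order_on A (relation_of P A)"
    unfolding partial_order_on_def preorder_on_def refl_on_def trans_on_def antisym_on_def
      relation_of_def P_def by auto
  have "\<exists>u \<in> A. \<forall>a \<in> C. P a u" if C: "C \<in> Chains (relation_of P A)" for C
  proof (cases "C = {}")
    case True
    then show ?thesis using assms unfolding A_def by auto
  next
    case False
    have sub: "\<And>q. q \<in> C \<Longrightarrow> sublinear q \<and> q \<le> p"
      using C unfolding Chains_def relation_of_def A_def by auto
    have chain: "\<And>a b. a \<in> C \<Longrightarrow> b \<in> C \<Longrightarrow> a \<le> b \<or> b \<le> a"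
      using C unfolding Chains_def relation_of_def P_def by auto
    obtain q where "q \<in> C" using False by auto
    then have "(\<lambda>x. INF q\<in>C. q x) \<in> A"
      using sub sublinear_Inf_chain[OF False sub chain] unfolding A_def by (auto intro: order_trans)
    then show ?thesis using sublinear_Inf_chain(2)[OF False sub chain] unfolding P_def by blast
  qed
  from predicate_Zorn[OF po this] obtain m where "m \<in> A" "\<forall>a\<in>A. P m a \<longrightarrow> a = m" by blast
  then show ?thesis unfolding A_def P_def by (auto intro: order_trans)
qed

lemma sublinear_Inf_translate:
  fixes m :: "'a::real_vector \<Rightarrow> real" and x :: 'a
  assumes m: "sublinear m"
  defines "q \<equiv> \<lambda>v. INF t\<in>{0<..}. m (v + t *\<^sub>R x) - t * m x"
  shows "sublinear q" and "\<And>v t. t > 0 \<Longrightarrow> q v \<le> m (v + t *\<^sub>R x) - t * m x"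
proof -
  have bdd: "bdd_below ((\<lambda>t. m (v + t *\<^sub>R x) - t * m x) ` {0<..})" for v
  proof (rule bdd_belowI[where m = "- m (- v)"], clarify)
    fix t :: real assume "t > 0"
    have "m (t *\<^sub>R x) \<le> m (v + t *\<^sub>R x) + m (- v)" using sublinear_add_le[OF m, of "v + t *\<^sub>R x" "- v"] by simp
    then show "- m (- v) \<le> m (v + t *\<^sub>R x) - t * m x" using sublinear_scaleR[OF m, of t x] \<open>t > 0\<close> by simp
  qed
  show low: "q v \<le> m (v + t *\<^sub>R x) - t * m x" if "t > 0" for v t
    unfolding q_def using that bdd by (auto intro!: cInf_lower)
  have gr: "a \<le> q v" if "\<And>t. t > 0 \<Longrightarrow> a \<le> m (v + t *\<^sub>R x) - t * m x" for a v
    unfolding q_def using that by (auto intro!: cINF_greatest)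
  have qadd: "q (a + b) \<le> q a + q b" for a b
  proof -
    have "q (a + b) - (m (b + s *\<^sub>R x) - s * m x) \<le> q a" if s: "s > 0" for s
    proof (rule gr)
      fix t :: real assume t: "t > 0"
      have "q (a + b) \<le> m ((a + b) + (t + s) *\<^sub>R x) - (t + s) * m x" by (rule low) (use s t in simp)
      also have "m ((a + b) + (t + s) *\<^sub>R x) \<le> m (a + t *\<^sub>R x) + m (b + s *\<^sub>R x)"
        using sublinear_add_le[OF m, of "a + t *\<^sub>R x" "b + s *\<^sub>R x"] by (simp add: algebra_simps)
      finally show "q (a + b) - (m (b + s *\<^sub>R x) - s * m x) \<le> m (a + t *\<^sub>R x) - t * m x"
        by (simp add: algebra_simps)
    qed
    then have "q (a + b) - q a \<le> q b" by (intro gr) (auto simp: algebra_simps)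
    then show ?thesis by simp
  qed
  have "q 0 = 0"
  proof (rule antisym)
    show "q 0 \<le> 0" using low[of 1 0] sublinear_add_le[OF m, of 0 x] sublinear_zero[OF m] by simp
    show "0 \<le> q 0" by (rule gr) (simp add: sublinear_scaleR[OF m])
  qed
  moreover have "q (c *\<^sub>R a) = c * q a" if c: "c > 0" for c a
  proof (rule antisym)
    show "c * q a \<le> q (c *\<^sub>R a)"
    proof (rule gr)
      fix t :: real assume t: "t > 0"
      have "c * q a \<le> c * (m (a + (t / c) *\<^sub>R x) - (t / c) * m x)"
        using low[of "t / c" a] t c by (simp add: mult_left_mono)
      also have "\<dots> = c * m (a + (t / c) *\<^sub>R x) - t * m x" using c by (simp add: algebra_simps)
      also have "c * m (a + (t / c) *\<^sub>R x) = m (c *\<^sub>R (a + (t / c) *\<^sub>R x))"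
        using c by (simp add: sublinear_scaleR[OF m])
      also have "c *\<^sub>R (a + (t / c) *\<^sub>R x) = c *\<^sub>R a + t *\<^sub>R x" using c by (simp add: algebra_simps)
      finally show "c * q a \<le> m (c *\<^sub>R a + t *\<^sub>R x) - t * m x" .
    qed
    have "q (c *\<^sub>R a) / c \<le> q a"
    proof (rule gr)
      fix t :: real assume t: "t > 0"
      have "q (c *\<^sub>R a) \<le> m (c *\<^sub>R a + (c * t) *\<^sub>R x) - (c * t) * m x" by (rule low) (use t c in simp)
      also have "c *\<^sub>R a + (c * t) *\<^sub>R x = c *\<^sub>R (a + t *\<^sub>R x)" by (simp add: algebra_simps)
      also have "m \<dots> = c * m (a + t *\<^sub>R x)" using c by (simp add: sublinear_scaleR[OF m])
      finally show "q (c *\<^sub>R a) / c \<le> m (a + t *\<^sub>R x) - t * m x" using c by (simp add: field_simps)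
    qed
    then show "q (c *\<^sub>R a) \<le> c * q a" using c by (simp add: field_simps)
  qed
  ultimately show "sublinear q" unfolding sublinear_iff_pos_scaleR using qadd by blast
qed

lemma minimal_sublinear_superadditive:
  fixes m :: "'a::real_vector \<Rightarrow> real"
  assumes m: "sublinear m" and minimal: "\<And>q. sublinear q \<Longrightarrow> q \<le> m \<Longrightarrow> q = m"
  shows "m v + m x \<le> m (v + x)"
proof -
  define q where "q = (\<lambda>v. INF t\<in>{0<..}. m (v + t *\<^sub>R x) - t * m x)"
  have q1: "q v \<le> m (v + x) - m x" for v
    using sublinear_Inf_translate(2)[OF m, where x = x and t = 1 and v = v] unfolding q_def by simp
  have "q \<le> m"
  proof (rule le_funI)
    fix v show "q v \<le> m v" using q1[of v] sublinear_add_le[OF m, of v x] by simp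
  qed
  then have "q = m" using minimal sublinear_Inf_translate(1)[OF m, where x = x] unfolding q_def by blast
  then show ?thesis using q1[of v] by simp
qed

theorem sublinear_dominates_linear:
  fixes p :: "'a::real_vector \<Rightarrow> real"
  assumes "sublinear p"
  shows "\<exists>l. linear l \<and> (\<forall>x. l x \<le> p x)"
proof -
  obtain m where m: "sublinear m" "m \<le> p" and minimal: "\<And>q. sublinear q \<Longrightarrow> q \<le> m \<Longrightarrow> q = m"
    using sublinear_minimal_below[OF assms] by blast
  have add: "m (a + b) = m a + m b" for a b
    using minimal_sublinear_superadditive[OF m(1) minimal] sublinear_add_le[OF m(1)] by (meson antisym)
  have neg: "m (- a) = - m a" for a
    using add[of a "- a"] sublinear_zero[OF m(1)] by simp
  have "m (c *\<^sub>R a) = c * m a" for c a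
  proof (cases "c \<ge> 0")
    case False
    then have "m ((- c) *\<^sub>R a) = (- c) * m a" using sublinear_scaleR[OF m(1), of "- c"] by simp
    then show ?thesis using neg[of "(- c) *\<^sub>R a"] by simp
  qed (simp add: sublinear_scaleR[OF m(1)])
  then have "linear m" using add by (intro linearI) auto
  then show ?thesis using m(2) by (auto simp: le_fun_def)
qed

section \<open>The sandwich theorem\<close>

lemma perspective_combination_le:
  fixes F \<Psi> :: "'a::real_vector \<Rightarrow> real"
  assumes F: "convex_on D F" and \<Psi>: "convex_on UNIV \<Psi>"
    and t1: "t1 > 0" and t2: "t2 > 0" and u1: "u1 \<in> D" and u2: "u2 \<in> D"
  defines "t \<equiv> t1 * t2 / (t1 + t2)"
  defines "u \<equiv> (t2 / (t1 + t2)) *\<^sub>R u1 + (t1 / (t1 + t2)) *\<^sub>R u2"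
  shows "u \<in> D" "t > 0"
    "(F u + \<Psi> (u - t *\<^sub>R (va + vb)) - m) / t \<le>
      (F u1 + \<Psi> (u1 - t1 *\<^sub>R va) - m) / t1 + (F u2 + \<Psi> (u2 - t2 *\<^sub>R vb) - m) / t2"
proof -
  define \<mu> where "\<mu> = t1 / (t1 + t2)"
  have mu: "0 \<le> \<mu>" "\<mu> \<le> 1" and u': "u = (1 - \<mu>) *\<^sub>R u1 + \<mu> *\<^sub>R u2"
    using t1 t2 unfolding \<mu>_def u_def by (auto simp: field_simps)
  show "u \<in> D" using convexD_alt[OF convex_on_imp_convex[OF F] u1 u2] mu unfolding u' by simp
  show tp: "t > 0" unfolding t_def using t1 t2 by simp
  have e1: "(1 - \<mu>) * t1 = t" "\<mu> * t2 = t" unfolding \<mu>_def t_def using t1 t2 by (auto simp: field_simps)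
  have "(1 - \<mu>) *\<^sub>R (u1 - t1 *\<^sub>R va) + \<mu> *\<^sub>R (u2 - t2 *\<^sub>R vb)
      = u - ((1 - \<mu>) * t1) *\<^sub>R va - (\<mu> * t2) *\<^sub>R vb"
    unfolding u' by (simp add: algebra_simps)
  then have "u - t *\<^sub>R (va + vb) = (1 - \<mu>) *\<^sub>R (u1 - t1 *\<^sub>R va) + \<mu> *\<^sub>R (u2 - t2 *\<^sub>R vb)"
    unfolding e1 by (simp add: algebra_simps)
  then have "\<Psi> (u - t *\<^sub>R (va + vb)) \<le> (1 - \<mu>) * \<Psi> (u1 - t1 *\<^sub>R va) + \<mu> * \<Psi> (u2 - t2 *\<^sub>R vb)"
    using convex_onD[OF \<Psi>, of \<mu>] mu by simp
  moreover have "F u \<le> (1 - \<mu>) * F u1 + \<mu> * F u2" unfolding u' using convex_onD[OF F, of \<mu>] mu u1 u2 by simp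
  ultimately have "F u + \<Psi> (u - t *\<^sub>R (va + vb)) - m \<le>
     (1 - \<mu>) * (F u1 + \<Psi> (u1 - t1 *\<^sub>R va) - m) + \<mu> * (F u2 + \<Psi> (u2 - t2 *\<^sub>R vb) - m)"
    by (simp add: algebra_simps)
  also have "\<dots> = t * ((F u1 + \<Psi> (u1 - t1 *\<^sub>R va) - m) / t1 + (F u2 + \<Psi> (u2 - t2 *\<^sub>R vb) - m) / t2)"
  proof -
    have "1 - \<mu> = t / t1" "\<mu> = t / t2" using e1 t1 t2 by (simp_all add: eq_divide_eq)
    then show ?thesis by (simp add: distrib_left)
  qed
  finally show "(F u + \<Psi> (u - t *\<^sub>R (va + vb)) - m) / t \<le>
      (F u1 + \<Psi> (u1 - t1 *\<^sub>R va) - m) / t1 + (F u2 + \<Psi> (u2 - t2 *\<^sub>R vb) - m) / t2"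
    using tp by (simp add: divide_le_eq mult.commute)
qed

lemma sublinear_below_perspective_quotients:
  fixes F \<Psi> :: "'a::real_vector \<Rightarrow> real"
  assumes F: "convex_on D F" and \<Psi>: "convex_on UNIV \<Psi>" and x0: "x0 \<in> D"
    and low: "\<And>u. u \<in> D \<Longrightarrow> m \<le> F u + \<Psi> u"
  shows "\<exists>p. sublinear p \<and> (\<forall>v t u. t > 0 \<longrightarrow> u \<in> D \<longrightarrow> p v \<le> (F u + \<Psi> (u - t *\<^sub>R v) - m) / t)"
proof -
  define g where "g = (\<lambda>v (t, u). (F u + \<Psi> (u - t *\<^sub>R v) - m) / t)"
  define p where "p = (\<lambda>v. INF tu\<in>{0<..} \<times> D. g v tu)"
  have comb: "\<exists>t>0. \<exists>u\<in>D. g (va + vb) (t, u) \<le> g va (t1, u1) + g vb (t2, u2)"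
    if "t1 > 0" "t2 > 0" "u1 \<in> D" "u2 \<in> D" for va vb t1 t2 u1 u2
    using perspective_combination_le(1,2)[OF F \<Psi> that]
      perspective_combination_le(3)[OF F \<Psi> that, where va = va and vb = vb and m = m]
    unfolding g_def prod.case by blast
  have lower: "- g (- v) (1, x0) \<le> g v (t, u)" if tu: "t > 0" "u \<in> D" for v t u
  proof -
    obtain t' u' where "t' > 0" "u' \<in> D" "g (v + - v) (t', u') \<le> g v (t, u) + g (- v) (1, x0)"
      using comb[OF tu(1) _ tu(2) x0, of 1 v "- v"] by auto
    moreover have "0 \<le> g 0 (t', u')" if "t' > 0" "u' \<in> D" using low[OF that(2)] that(1) unfolding g_def by simp
    ultimately show ?thesis by simp
  qed
  have lowp: "p v \<le> g v (t, u)" if "t > 0" "u \<in> D" for v t u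
    unfolding p_def using that lower by (force intro!: cInf_lower bdd_belowI[where m = "- g (- v) (1, x0)"])
  have grp: "a \<le> p v" if "\<And>t u. t > 0 \<Longrightarrow> u \<in> D \<Longrightarrow> a \<le> g v (t, u)" for a v
    unfolding p_def using that x0 by (force intro!: cINF_greatest)
  have padd: "p (va + vb) \<le> p va + p vb" for va vb
  proof -
    have "p (va + vb) - g vb (t2, u2) \<le> p va" if h2: "t2 > 0" "u2 \<in> D" for t2 u2
    proof (rule grp)
      fix t1 :: real and u1 :: 'a assume "t1 > 0" "u1 \<in> D"
      then obtain t u where "t > 0" "u \<in> D" "g (va + vb) (t, u) \<le> g va (t1, u1) + g vb (t2, u2)"
        using comb[of t1 t2 u1 u2 va vb] h2 by auto
      then show "p (va + vb) - g vb (t2, u2) \<le> g va (t1, u1)" using lowp[of t u "va + vb"] by simp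
    qed
    then have "p (va + vb) - p va \<le> p vb" by (intro grp) (auto simp: algebra_simps)
    then show ?thesis by simp
  qed
  have scale: "g (c *\<^sub>R v) (t, u) = c * g v (c * t, u)" if "c > 0" "t > 0" for c v t u
    unfolding g_def using that by (simp add: field_simps)
  have phom: "p (c *\<^sub>R v) = c * p v" if c: "c > 0" for c v
  proof (rule antisym)
    have "p (c *\<^sub>R v) / c \<le> p v"
    proof (rule grp)
      fix s :: real and u :: 'a assume su: "s > 0" "u \<in> D"
      have "p (c *\<^sub>R v) \<le> g (c *\<^sub>R v) (s / c, u)" by (rule lowp) (use su c in auto)
      also have "\<dots> = c * g v (s, u)" using scale[of c "s / c" v u] su c by simp
      finally show "p (c *\<^sub>R v) / c \<le> g v (s, u)" using c by (simp add: field_simps)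
    qed
    then show "p (c *\<^sub>R v) \<le> c * p v" using c by (simp add: field_simps)
    show "c * p v \<le> p (c *\<^sub>R v)"
    proof (rule grp)
      fix t :: real and u :: 'a assume tu: "t > 0" "u \<in> D"
      have "c * p v \<le> c * g v (c * t, u)" using lowp[of "c * t" u v] tu c by (simp add: mult_left_mono)
      then show "c * p v \<le> g (c *\<^sub>R v) (t, u)" using scale[OF c tu(1)] by simp
    qed
  qed
  moreover have "p 0 = 0" using phom[of 2 0] by simp
  ultimately have "sublinear p" unfolding sublinear_iff_pos_scaleR using padd by blast
  then show ?thesis using lowp unfolding g_def by auto
qed

theorem convex_sandwich:
  fixes F \<Psi> :: "'a::real_normed_vector \<Rightarrow> real"
  assumes F: "convex_on D F" and \<Psi>: "convex_on UNIV \<Psi>" and x0: "x0 \<in> D"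
    and bounded: "\<And>y. norm (y - x0) \<le> 1 \<Longrightarrow> \<Psi> y \<le> M"
    and low: "\<And>u. u \<in> D \<Longrightarrow> m \<le> F u + \<Psi> u"
  shows "\<exists>l::'a \<Rightarrow>\<^sub>L real. \<forall>u\<in>D. \<forall>w. m \<le> F u + \<Psi> w + l (w - u)"
proof -
  obtain p where p: "sublinear p" and p_le: "\<And>v t u. t > 0 \<Longrightarrow> u \<in> D \<Longrightarrow> p v \<le> (F u + \<Psi> (u - t *\<^sub>R v) - m) / t"
    using sublinear_below_perspective_quotients[OF F \<Psi> x0 low] by blast
  obtain l where l: "linear l" "\<And>x. l x \<le> p x" using sublinear_dominates_linear[OF p] by blast
  have lK: "l v \<le> norm v * (F x0 + M - m)" for v
  proof (cases "v = 0")
    case True then show ?thesis using l(1) by (simp add: linear_0)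
  next
    case False
    then have nv: "norm v > 0" by simp
    have "l v \<le> (F x0 + \<Psi> (x0 - (1 / norm v) *\<^sub>R v) - m) / (1 / norm v)"
      using l(2)[of v] p_le[of "1 / norm v" x0 v] nv x0 by simp
    also have "\<dots> = (F x0 + \<Psi> (x0 - (1 / norm v) *\<^sub>R v) - m) * norm v" by simp
    also have "\<dots> \<le> (F x0 + M - m) * norm v" using bounded[of "x0 - (1 / norm v) *\<^sub>R v"] nv
      by (intro mult_right_mono) auto
    finally show ?thesis by (simp add: mult.commute)
  qed
  have "bounded_linear l"
  proof (rule bounded_linear_intro[where K = "F x0 + M - m"])
    show "l (x + y) = l x + l y" "l (r *\<^sub>R x) = r *\<^sub>R l x" for x y r
      using l(1) by (simp_all add: linear_add linear_scale)
    show "norm (l x) \<le> norm x * (F x0 + M - m)" for x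
      using lK[of x] lK[of "- x"] l(1) by (simp add: linear_neg abs_le_iff)
  qed
  then have la: "blinfun_apply (Blinfun l) = l" by (rule bounded_linear_Blinfun_apply)
  have "m \<le> F u + \<Psi> w + l (w - u)" if "u \<in> D" for u w
  proof -
    have "l (u - w) \<le> F u + \<Psi> w - m" using l(2)[of "u - w"] p_le[of 1 u "u - w"] that by simp
    moreover have "l (w - u) = - l (u - w)" using l(1) by (metis linear_neg minus_diff_eq)
    ultimately show ?thesis by simp
  qed
  then show ?thesis using la by (intro exI[of _ "Blinfun l"]) auto
qed

section \<open>Ekeland's variational principle\<close>

lemma lsc_fun_le_limit:
  fixes \<phi> :: "'a::metric_space \<Rightarrow> ereal"
  assumes "lsc_fun \<phi>" "X \<longlonglongrightarrow> s" "\<And>m. m \<ge> N \<Longrightarrow> \<phi> (X m) \<le> ereal (g m)" "g \<longlonglongrightarrow> G"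
  shows "\<phi> s \<le> ereal G"
proof (rule ccontr)
  assume "\<not> ?thesis"
  then have "ereal G < \<phi> s" by simp
  then obtain c where "ereal G < ereal c" "ereal c < \<phi> s" using ereal_dense2 by blast
  then have c: "G < c" "ereal c < \<phi> s" by simp_all
  have "eventually (\<lambda>y. c < \<phi> y) (nhds s)" using assms(1) c(2) unfolding lsc_fun_def by blast
  then have "eventually (\<lambda>m. c < \<phi> (X m)) sequentially" using assms(2) unfolding filterlim_iff by blast
  moreover have "eventually (\<lambda>m. g m < c) sequentially" using assms(4) c(1) by (simp add: order_tendstoD(2))
  ultimately have "eventually (\<lambda>m::nat. False) sequentially" using eventually_ge_at_top[of N]
  proof eventually_elim
    case (elim m)
    then have "ereal c < ereal (g m)" using assms(3)[of m] by (meson less_le_trans)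
    then show False using elim by simp
  qed
  then show False by simp
qed

lemma lsc_fun_add_continuous:
  fixes f :: "'a::metric_space \<Rightarrow> ereal"
  assumes "lsc_fun f" and "continuous_on UNIV h"
  shows "lsc_fun (\<lambda>y. f y + ereal (h y))"
  unfolding lsc_fun_def
proof (intro allI impI)
  fix x c assume "c < f x + ereal (h x)"
  then obtain c' where c': "c < ereal c'" "ereal c' < f x + ereal (h x)" using ereal_dense2 by blast
  then have "ereal (c' - h x) < f x" by (cases "f x") auto
  then obtain w where w: "c' - h x < w" "ereal w < f x" using ereal_dense2 by fastforce
  have "eventually (\<lambda>y. ereal w < f y) (nhds x)" using assms(1) w(2) unfolding lsc_fun_def by blast
  moreover have "eventually (\<lambda>y. c' - w < h y) (nhds x)"
    using assms(2) w(1) by (intro order_tendstoD(1)) (auto simp: continuous_on_def tendsto_at_iff_tendsto_nhds)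
  ultimately show "eventually (\<lambda>y. c < f y + ereal (h y)) (nhds x)"
  proof eventually_elim
    case (elim y)
    then have "ereal c' < f y + ereal (h y)" by (cases "f y") auto
    then show ?case using c'(1) by (meson order.strict_trans)
  qed
qed

lemma dist_descent_trans:
  fixes \<Phi> :: "'a::metric_space \<Rightarrow> real"
  assumes "e \<ge> 0" "\<Phi> y + e * dist y z \<le> \<Phi> z" "\<Phi> z + e * dist z x \<le> \<Phi> x"
  shows "\<Phi> y + e * dist y x \<le> \<Phi> x"
  using assms mult_left_mono[OF dist_triangle[of y x z] assms(1)] by (simp add: distrib_left)

lemma ekeland_sequence:
  fixes \<Phi> :: "'a::metric_space \<Rightarrow> real"
  assumes bdd: "bdd_below (\<Phi> ` D)" and y0: "y0 \<in> D" and e: "e > 0"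
  defines "S \<equiv> \<lambda>x. {y\<in>D. \<Phi> y + e * dist y x \<le> \<Phi> x}"
  shows "\<exists>X. X 0 = y0 \<and> (\<forall>n m. n \<le> m \<longrightarrow> X m \<in> S (X n))
    \<and> (\<forall>r>0. \<forall>\<^sub>F n in sequentially. \<forall>y\<in>S (X n). dist y (X n) < r)"
proof -
  have trans: "y \<in> S z \<Longrightarrow> z \<in> S x \<Longrightarrow> y \<in> S x" for x y z
    using dist_descent_trans[of e \<Phi>] e unfolding S_def by auto
  define I where "I x = Inf (\<Phi> ` S x)" for x
  have Ilow: "I x \<le> \<Phi> y" if "y \<in> S x" for x y
  proof -
    have "bdd_below (\<Phi> ` S x)" using bdd by (rule bdd_below_mono) (auto simp: S_def)
    then show ?thesis unfolding I_def using that by (simp add: cInf_lower)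
  qed
  have ex: "\<exists>y. y \<in> S x \<and> \<Phi> y < I x + inverse (real (Suc n))" if "x \<in> D" for x n
  proof -
    have "\<Phi> ` S x \<noteq> {}" using that unfolding S_def by auto
    from cInf_lessD[OF this, of "I x + inverse (real (Suc n))"] show ?thesis unfolding I_def by auto
  qed
  define next_point where "next_point n x = (SOME y. y \<in> S x \<and> \<Phi> y < I x + inverse (real (Suc n)))" for n x
  have nxt: "next_point n x \<in> S x \<and> \<Phi> (next_point n x) < I x + inverse (real (Suc n))" if "x \<in> D" for x n
    unfolding next_point_def using someI_ex[OF ex[OF that]] .
  define X where "X = rec_nat y0 next_point"
  have XD: "X n \<in> D" for n
  proof (induction n)
    case (Suc n)
    then show ?case using nxt[OF Suc] unfolding X_def S_def by simp
  qed (simp add: X_def y0)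
  have Xstep: "X (Suc n) \<in> S (X n) \<and> \<Phi> (X (Suc n)) < I (X n) + inverse (real (Suc n))" for n
    using nxt[OF XD[of n]] by (simp add: X_def)
  have nest: "X m \<in> S (X n)" if "n \<le> m" for n m
    using that
  proof (induction m rule: dec_induct)
    case base then show ?case using XD unfolding S_def by simp
  next
    case (step m) then show ?case using trans Xstep by blast
  qed
  have small: "e * dist y (X (Suc n)) < inverse (real (Suc n))" if y: "y \<in> S (X (Suc n))" for y n
  proof -
    have "y \<in> S (X n)" using trans[OF y] Xstep by blast
    then show ?thesis using Ilow[of y "X n"] Xstep[of n] y unfolding S_def by auto
  qed
  have "\<forall>\<^sub>F n in sequentially. \<forall>y\<in>S (X n). dist y (X n) < r" if "r > 0" for r
  proof -
    have "\<forall>\<^sub>F n in sequentially. \<forall>y\<in>S (X (Suc n)). dist y (X (Suc n)) < r"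
      using order_tendstoD(2)[OF LIMSEQ_inverse_real_of_nat mult_pos_pos[OF e that]]
    proof (elim eventually_mono, intro ballI)
      fix n y assume "inverse (real (Suc n)) < e * r" "y \<in> S (X (Suc n))"
      then have "e * dist y (X (Suc n)) < e * r" using small by (meson less_trans)
      then show "dist y (X (Suc n)) < r" using e by simp
    qed
    then show ?thesis by (rule eventually_sequentially_Suc[THEN iffD1])
  qed
  moreover have "X 0 = y0" by (simp add: X_def)
  ultimately show ?thesis using nest by blast
qed

theorem ekeland_variational_principle:
  fixes \<phi> :: "'a::complete_space \<Rightarrow> ereal"
  assumes lsc: "lsc_fun \<phi>" and bdd: "\<And>x. ereal c \<le> \<phi> x" and y0: "\<phi> y0 \<noteq> \<infinity>" and e: "e > 0"
  shows "\<exists>s. \<phi> s \<le> \<phi> y0 \<and> (\<forall>y. \<phi> s \<le> \<phi> y + ereal (e * dist y s))"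
proof -
  define D where "D = {x. \<phi> x \<noteq> \<infinity>}"
  define \<Phi> where "\<Phi> x = real_of_ereal (\<phi> x)" for x
  have fin: "\<phi> x = ereal (\<Phi> x)" if "x \<in> D" for x
    using that bdd[of x] unfolding D_def \<Phi>_def by (cases "\<phi> x") auto
  define S where "S x = {y\<in>D. \<Phi> y + e * dist y x \<le> \<Phi> x}" for x
  have "bdd_below (\<Phi> ` D)"
  proof (rule bdd_belowI[where m = c], clarify)
    fix x assume "x \<in> D"
    then show "c \<le> \<Phi> x" using bdd[of x] fin by simp
  qed
  then obtain X where X0: "X 0 = y0" and nest: "\<And>n m. n \<le> m \<Longrightarrow> X m \<in> S (X n)"
    and shrink: "\<And>r. r > 0 \<Longrightarrow> \<forall>\<^sub>F n in sequentially. \<forall>y\<in>S (X n). dist y (X n) < r"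
    using ekeland_sequence[of \<Phi> D y0 e] y0 e unfolding D_def S_def by blast
  have "Cauchy X"
  proof (rule metric_CauchyI)
    fix r :: real assume "r > 0"
    then obtain N where N: "\<forall>y\<in>S (X N). dist y (X N) < r / 2"
      using eventually_sequentially shrink[of "r / 2"] by auto
    then have "dist (X m) (X n) < r" if "N \<le> m" "N \<le> n" for m n
      using nest[OF that(1)] nest[OF that(2)] dist_triangle_half_l by blast
    then show "\<exists>M. \<forall>m\<ge>M. \<forall>n\<ge>M. dist (X m) (X n) < r" by blast
  qed
  then obtain s where s: "X \<longlonglongrightarrow> s" using Cauchy_convergent_iff convergent_def by blast
  have sS: "s \<in> S (X n)" for n
  proof -
    have "\<phi> s \<le> ereal (\<Phi> (X n) - e * dist s (X n))"
    proof (rule lsc_fun_le_limit[OF lsc s])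
      fix m assume "n \<le> m"
      then show "\<phi> (X m) \<le> ereal (\<Phi> (X n) - e * dist (X m) (X n))"
        using nest fin unfolding S_def by fastforce
    next
      show "(\<lambda>m. \<Phi> (X n) - e * dist (X m) (X n)) \<longlonglongrightarrow> \<Phi> (X n) - e * dist s (X n)"
        by (intro tendsto_intros s)
    qed
    moreover from this have "s \<in> D" unfolding D_def by auto
    ultimately show ?thesis using fin unfolding S_def by auto
  qed
  have "\<phi> s \<le> \<phi> y0"
  proof -
    have "\<Phi> s + e * dist s y0 \<le> \<Phi> y0" "s \<in> D" using sS[of 0] X0 unfolding S_def by auto
    moreover have "y0 \<in> D" using y0 unfolding D_def by simp
    moreover have "0 \<le> e * dist s y0" using e by simp
    ultimately show ?thesis using fin by simp
  qed
  moreover have "\<phi> s \<le> \<phi> y + ereal (e * dist y s)" for y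
  proof (rule ccontr)
    assume "\<not> ?thesis"
    then have "y \<in> D" unfolding D_def by auto
    with \<open>\<not> ?thesis\<close> have "y \<in> S s" "y \<noteq> s" using fin sS[of 0] unfolding S_def by auto
    then have "y \<in> S (X n)" for n using sS[of n] dist_descent_trans[of e \<Phi>] e unfolding S_def by auto
    moreover obtain n where "\<forall>z\<in>S (X n). dist z (X n) < dist y s / 2"
      using eventually_sequentially shrink[of "dist y s / 2"] \<open>y \<noteq> s\<close> by auto
    ultimately show False using sS[of n] dist_triangle_half_l[of y "X n" "dist y s" s] by auto
  qed
  ultimately show ?thesis by blast
qed

section \<open>Subdifferentials of convex functions\<close>

lemma convex_on_finite_part:
  fixes f :: "'a::real_vector \<Rightarrow> ereal"
  assumes cf: "convex_fun f" and nm: "\<And>x. f x \<noteq> - \<infinity>"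
  shows "convex_on {x. f x \<noteq> \<infinity>} (\<lambda>x. real_of_ereal (f x))"
proof -
  define D where "D = {x. f x \<noteq> \<infinity>}"
  have fin: "f x = ereal (real_of_ereal (f x))" if "x \<in> D" for x
    using that nm[of x] unfolding D_def by (cases "f x") auto
  have key: "f ((1 - t) *\<^sub>R x + t *\<^sub>R y) \<le> ereal ((1 - t) * real_of_ereal (f x) + t * real_of_ereal (f y))"
    if "0 < t" "t < 1" "x \<in> D" "y \<in> D" for t x y
  proof -
    have "f ((1 - t) *\<^sub>R x + t *\<^sub>R y) \<le> ereal (1 - t) * f x + ereal t * f y"
      using cf that unfolding convex_fun_def by blast
    also have "\<dots> = ereal ((1 - t) * real_of_ereal (f x) + t * real_of_ereal (f y))"
      using fin[OF that(3)] fin[OF that(4)] by (metis plus_ereal.simps(1) times_ereal.simps(1))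
    finally show ?thesis .
  qed
  have cD: "convex D" unfolding convex_alt
  proof (intro ballI allI impI)
    fix x y and u :: real assume xy: "x \<in> D" "y \<in> D" and u: "0 \<le> u \<and> u \<le> 1"
    show "(1 - u) *\<^sub>R x + u *\<^sub>R y \<in> D"
      using xy key[of u x y] u by (cases "u = 0 \<or> u = 1") (auto simp: D_def)
  qed
  have "convex_on D (\<lambda>x. real_of_ereal (f x))"
  proof (rule convex_onI[OF _ cD])
    fix t x y assume a: "(0::real) < t" "t < 1" "x \<in> D" "y \<in> D"
    have "(1 - t) *\<^sub>R x + t *\<^sub>R y \<in> D" using cD a unfolding convex_alt by auto
    then show "real_of_ereal (f ((1 - t) *\<^sub>R x + t *\<^sub>R y)) \<le> (1 - t) * real_of_ereal (f x) + t * real_of_ereal (f y)"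
      using key[OF a] fin by (metis ereal_less_eq(3))
  qed
  then show ?thesis unfolding D_def .
qed

lemma subdiff_iff_subgradient:
  fixes f :: "'a::real_normed_vector \<Rightarrow> ereal"
  assumes nm: "\<And>x. f x \<noteq> - \<infinity>"
  shows "l \<in> subdiff f s \<longleftrightarrow> f s \<noteq> \<infinity> \<and> (\<forall>y. f s + ereal (l (y - s)) \<le> f y)"
proof
  assume "l \<in> subdiff f s"
  then have eq: "f s + fenchel_conj f l = ereal (l s)" unfolding subdiff_def by simp
  then obtain r c where r: "f s = ereal r" and c: "fenchel_conj f l = ereal c"
    using nm[of s] by (cases "f s"; cases "fenchel_conj f l") auto
  have "f s + ereal (l (y - s)) \<le> f y" for y
  proof -
    have "ereal (l y) - f y \<le> fenchel_conj f l" unfolding fenchel_conj_def by (rule SUP_upper) simp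
    then show ?thesis using eq r c nm[of y] by (cases "f y") (auto simp: blinfun.diff_right)
  qed
  then show "f s \<noteq> \<infinity> \<and> (\<forall>y. f s + ereal (l (y - s)) \<le> f y)" using r by simp
next
  assume a: "f s \<noteq> \<infinity> \<and> (\<forall>y. f s + ereal (l (y - s)) \<le> f y)"
  then obtain r where r: "f s = ereal r" using nm[of s] by (cases "f s") auto
  have "fenchel_conj f l = ereal (l s - r)"
    unfolding fenchel_conj_def
  proof (rule antisym)
    show "(SUP x. ereal (l x) - f x) \<le> ereal (l s - r)"
    proof (rule SUP_least)
      fix y
      have le: "ereal r + ereal (l (y - s)) \<le> f y" using a r by metis
      show "ereal (l y) - f y \<le> ereal (l s - r)"
        using le nm[of y] by (cases "f y") (auto simp: blinfun.diff_right)
    qed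
    have "ereal (l s) - f s \<le> (SUP x. ereal (l x) - f x)" by (rule SUP_upper) simp
    then show "ereal (l s - r) \<le> (SUP x. ereal (l x) - f x)" using r by simp
  qed
  then show "l \<in> subdiff f s" unfolding subdiff_def using r by simp
qed

lemma subdiff_monotone:
  fixes f :: "'a::real_normed_vector \<Rightarrow> ereal"
  assumes nm: "\<And>x. f x \<noteq> - \<infinity>"
  shows "monotone_mf (subdiff f)"
proof -
  have "0 \<le> (ss - ts) (s - t)" if "ss \<in> subdiff f s" "ts \<in> subdiff f t" for s ss t ts
  proof -
    have "f s \<noteq> \<infinity>" "f s + ereal (ss (t - s)) \<le> f t" "f t \<noteq> \<infinity>" "f t + ereal (ts (s - t)) \<le> f s"
      using that subdiff_iff_subgradient[where f = f, OF nm] by blast+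
    then have "ss (t - s) + ts (s - t) \<le> 0"
      using nm[of s] nm[of t] by (cases "f s"; cases "f t") auto
    moreover have "ss (t - s) = - ss (s - t)" by (metis blinfun.minus_right minus_diff_eq)
    ultimately show ?thesis by (simp add: blinfun.diff_left)
  qed
  then show ?thesis unfolding monotone_mf_def graph_mf_def by auto
qed

lemma subdiff_closed:
  fixes f :: "'a::real_normed_vector \<Rightarrow> ereal"
  assumes nm: "\<And>x. f x \<noteq> - \<infinity>" and lf: "lsc_fun f"
  shows "closed_mf (subdiff f)"
  unfolding closed_mf_def closed_sequential_limits
proof (intro allI impI, elim conjE)
  fix P :: "nat \<Rightarrow> 'a \<times> ('a \<Rightarrow>\<^sub>L real)" and L
  assume PG: "\<forall>n. P n \<in> graph_mf (subdiff f)" and PL: "P \<longlonglongrightarrow> L"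
  obtain s l where L: "L = (s, l)" by (cases L)
  define X where "X n = fst (P n)" for n
  define Y where "Y n = snd (P n)" for n
  have Xs: "X \<longlonglongrightarrow> s" and Yl: "Y \<longlonglongrightarrow> l"
    unfolding X_def Y_def using tendsto_fst[OF PL] tendsto_snd[OF PL] L by simp_all
  have sub: "Y n \<in> subdiff f (X n)" for n
    using PG unfolding graph_mf_def X_def Y_def by (simp add: case_prod_beta)
  have ineq: "f s \<le> ereal (r - l (y - s))" if fy: "f y = ereal r" for y r
  proof (rule lsc_fun_le_limit[OF lf Xs])
    fix m :: nat
    have "f (X m) + ereal (Y m (y - X m)) \<le> f y" using sub[of m] subdiff_iff_subgradient[where f = f, OF nm] by blast
    then show "f (X m) \<le> ereal (r - Y m (y - X m))" using fy nm[of "X m"] by (cases "f (X m)") auto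
  next
    show "(\<lambda>m. r - Y m (y - X m)) \<longlonglongrightarrow> r - l (y - s)"
      by (intro tendsto_diff tendsto_const blinfun.tendsto Yl Xs)
  qed
  have "l \<in> subdiff f s"
  proof -
    obtain y0 where "f y0 \<noteq> \<infinity>" using sub[of 0] subdiff_iff_subgradient[where f = f, OF nm] by blast
    then have "f s \<noteq> \<infinity>" using ineq[of y0] nm[of y0] by (cases "f y0") auto
    moreover have "f s + ereal (l (y - s)) \<le> f y" for y
      using ineq[of y] nm[of y] nm[of s] by (cases "f y"; cases "f s") auto
    ultimately show ?thesis using subdiff_iff_subgradient[where f = f, OF nm] by blast
  qed
  then show "L \<in> graph_mf (subdiff f)" unfolding graph_mf_def L by simp
qed

lemma convex_on_lower_bound_outside_ball:
  fixes F :: "'a::real_normed_vector \<Rightarrow> real"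
  assumes F: "convex_on D F" and x0: "x0 \<in> D" and \<rho>: "\<rho> > 0"
    and near: "\<And>y. y \<in> D \<Longrightarrow> dist y x0 \<le> \<rho> \<Longrightarrow> F x0 - 1 < F y"
    and y: "y \<in> D"
  shows "F x0 - 1 \<le> F y + dist x0 y / \<rho>"
proof (cases "dist y x0 \<le> \<rho>")
  case True
  then show ?thesis using near[OF y] \<rho> by (smt (verit) divide_nonneg_pos zero_le_dist)
next
  case False
  define R where "R = dist x0 y"
  have R: "R > \<rho>" using False unfolding R_def by (simp add: dist_commute)
  define \<tau> where "\<tau> = \<rho> / R"
  have \<tau>: "0 < \<tau>" "\<tau> < 1" using R \<rho> unfolding \<tau>_def by auto
  define z where "z = (1 - \<tau>) *\<^sub>R x0 + \<tau> *\<^sub>R y"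
  have "z - x0 = \<tau> *\<^sub>R (y - x0)" unfolding z_def by (simp add: algebra_simps)
  then have "dist z x0 = \<tau> * R" using \<tau> unfolding R_def by (simp add: dist_norm norm_minus_commute)
  also have "\<dots> = \<rho>" using R \<rho> unfolding \<tau>_def by simp
  finally have "dist z x0 = \<rho>" .
  moreover have "z \<in> D" using convexD_alt[OF convex_on_imp_convex[OF F] x0 y] \<tau> unfolding z_def by simp
  ultimately have "F x0 - 1 < F z" using near by simp
  also have "F z \<le> (1 - \<tau>) * F x0 + \<tau> * F y" unfolding z_def using convex_onD[OF F] \<tau> x0 y by simp
  finally have "F x0 - F y < 1 / \<tau>" using \<tau> by (simp add: field_simps)
  also have "1 / \<tau> = dist x0 y / \<rho>" unfolding \<tau>_def R_def using \<rho> R by simp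
  finally show ?thesis by simp
qed

lemma proper_convex_lsc_affine_minorant:
  fixes f :: "'a::real_normed_vector \<Rightarrow> ereal"
  assumes pf: "proper_fun f" and cf: "convex_fun f" and lf: "lsc_fun f"
  shows "\<exists>g::'a \<Rightarrow>\<^sub>L real. \<exists>b. \<forall>y. ereal (g y + b) \<le> f y"
proof -
  have nm: "\<And>x. f x \<noteq> - \<infinity>" using pf unfolding proper_fun_def by blast
  define D where "D = {x. f x \<noteq> \<infinity>}"
  define F where "F x = real_of_ereal (f x)" for x
  have cF: "convex_on D F" using convex_on_finite_part[OF cf nm] unfolding D_def F_def .
  have fin: "f x = ereal (F x)" if "x \<in> D" for x using that nm[of x] unfolding D_def F_def by (cases "f x") auto
  obtain x0 where x0: "x0 \<in> D" using pf unfolding proper_fun_def D_def by blast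
  have "ereal (F x0 - 1) < f x0" using fin[OF x0] by simp
  then have "eventually (\<lambda>y. ereal (F x0 - 1) < f y) (nhds x0)" using lf unfolding lsc_fun_def by blast
  then obtain r where r: "r > 0" "\<And>y. dist y x0 < r \<Longrightarrow> ereal (F x0 - 1) < f y"
    unfolding eventually_nhds_metric by blast
  have near: "F x0 - 1 < F y" if "y \<in> D" "dist y x0 \<le> r / 2" for y
    using r(2)[of y] fin[OF that(1)] that(2) r(1) by simp
  have \<Psi>: "convex_on UNIV (\<lambda>y. dist x0 y / (r / 2))"
    by (intro convex_on_cdiv convex_on_dist) (use r in auto)
  have bounded: "dist x0 y / (r / 2) \<le> 1 / (r / 2)" if "norm (y - x0) \<le> 1" for y
    using that r by (simp add: dist_norm norm_minus_commute divide_right_mono)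
  have low: "F x0 - 1 \<le> F u + dist x0 u / (r / 2)" if "u \<in> D" for u
    using convex_on_lower_bound_outside_ball[OF cF x0, where \<rho> = "r / 2"] near that r(1) by simp
  obtain l :: "'a \<Rightarrow>\<^sub>L real" where l: "\<And>u w. u \<in> D \<Longrightarrow> F x0 - 1 \<le> F u + dist x0 w / (r / 2) + l (w - u)"
    using convex_sandwich[OF cF \<Psi> x0 bounded low] by blast
  have "ereal (l y + (F x0 - 1 - l x0)) \<le> f y" for y
  proof (cases "y \<in> D")
    case True
    then have "F x0 - 1 \<le> F y + l (x0 - y)" using l[of y x0] by simp
    then show ?thesis using fin[OF True] by (simp add: blinfun.diff_right)
  qed (simp add: D_def)
  then show ?thesis by blast
qed

section \<open>Quasidensity\<close>

lemma convex_on_half_norm_sq: "convex_on UNIV (\<lambda>y::'a::real_normed_vector. (norm (y - x))\<^sup>2 / 2)"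
proof (rule convex_onI)
  fix t :: real and a b :: 'a assume t: "0 < t" "t < 1"
  have "(1 - t) *\<^sub>R a + t *\<^sub>R b - x = (1 - t) *\<^sub>R (a - x) + t *\<^sub>R (b - x)" by (simp add: algebra_simps)
  then have "norm ((1 - t) *\<^sub>R a + t *\<^sub>R b - x) \<le> (1 - t) * norm (a - x) + t * norm (b - x)"
    using norm_triangle_ineq[of "(1 - t) *\<^sub>R (a - x)" "t *\<^sub>R (b - x)"] t by simp
  then have "(norm ((1 - t) *\<^sub>R a + t *\<^sub>R b - x))\<^sup>2 \<le> ((1 - t) * norm (a - x) + t * norm (b - x))\<^sup>2"
    by (rule power_mono) simp
  also have "\<dots> \<le> (1 - t) * (norm (a - x))\<^sup>2 + t * (norm (b - x))\<^sup>2"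
    using convex_onD[OF convex_power2, of t "norm (a - x)" "norm (b - x)"] t by simp
  finally show "(norm ((1 - t) *\<^sub>R a + t *\<^sub>R b - x))\<^sup>2 / 2 \<le> (1 - t) * ((norm (a - x))\<^sup>2 / 2) + t * ((norm (b - x))\<^sup>2 / 2)"
    by simp
qed simp

lemma convex_on_linear: "linear g \<Longrightarrow> convex S \<Longrightarrow> convex_on S (g :: 'a::real_vector \<Rightarrow> real)"
  by (rule convex_onI) (simp_all add: linear_add linear_scale)

lemma le_of_le_add_scaled:
  fixes a b c :: real
  assumes "\<And>t. 0 < t \<Longrightarrow> t \<le> 1 \<Longrightarrow> a \<le> b + t * c"
  shows "a \<le> b"
proof (rule field_le_epsilon)
  fix \<epsilon> :: real assume "\<epsilon> > 0"
  define t where "t = min 1 (\<epsilon> / (\<bar>c\<bar> + 1))"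
  have t: "0 < t" "t \<le> 1" using \<open>\<epsilon> > 0\<close> unfolding t_def by auto
  have "t * c \<le> t * (\<bar>c\<bar> + 1)" using t by (intro mult_left_mono) auto
  also have "\<dots> \<le> \<epsilon> / (\<bar>c\<bar> + 1) * (\<bar>c\<bar> + 1)" unfolding t_def by (intro mult_right_mono) auto
  finally show "a \<le> b + \<epsilon>" using assms[OF t] by simp
qed

text \<open>Testing the hypothesis with \<open>v = t w\<close> bounds \<open>\<parallel>d\<parallel>\<close> by \<open>\<parallel>z\<parallel> + e\<close>, and testing it with \<open>v = -t z\<close>
  bounds \<open>d z\<close> by \<open>e\<parallel>z\<parallel> - \<parallel>z\<parallel>\<^sup>2\<close>; let \<open>t \<rightarrow> 0\<close>.\<close>
lemma quadratic_perturbation_estimate: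
  fixes z :: "'a::real_normed_vector" and d :: "'a \<Rightarrow>\<^sub>L real"
  assumes min: "\<And>v. (norm z)\<^sup>2 / 2 \<le> (norm (z + v))\<^sup>2 / 2 + e * norm v + d v" and e: "e \<ge> 0"
  shows "(norm z)\<^sup>2 / 2 + (norm d)\<^sup>2 / 2 + d z \<le> 2 * e * norm z + e\<^sup>2 / 2"
proof -
  have dv: "- d v \<le> (norm z + e) * norm v" for v
  proof (rule le_of_le_add_scaled[where c = "(norm v)\<^sup>2 / 2"])
    fix t :: real assume t: "0 < t" "t \<le> 1"
    have "norm (z + t *\<^sub>R v) \<le> norm z + t * norm v" using norm_triangle_ineq[of z "t *\<^sub>R v"] t by simp
    then have "(norm (z + t *\<^sub>R v))\<^sup>2 \<le> (norm z + t * norm v)\<^sup>2" by (rule power_mono) simp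
    then have "0 \<le> t * ((norm z + e) * norm v + t * ((norm v)\<^sup>2 / 2) + d v)"
      using min[of "t *\<^sub>R v"] t by (simp add: blinfun.scaleR_right power2_eq_square algebra_simps)
    then show "- d v \<le> (norm z + e) * norm v + t * ((norm v)\<^sup>2 / 2)"
      using t by (simp add: zero_le_mult_iff)
  qed
  have "norm d \<le> norm z + e"
  proof (rule norm_blinfun_bound)
    show "0 \<le> norm z + e" using e by simp
    show "norm (d v) \<le> (norm z + e) * norm v" for v
      using dv[of v] dv[of "- v"] by (simp add: blinfun.minus_right)
  qed
  then have dnorm: "(norm d)\<^sup>2 \<le> (norm z + e)\<^sup>2" by (rule power_mono) simp
  have dz: "d z \<le> - (norm z)\<^sup>2 + e * norm z"
  proof (rule le_of_le_add_scaled[where c = "(norm z)\<^sup>2 / 2"])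
    fix t :: real assume t: "0 < t" "t \<le> 1"
    have "(norm z)\<^sup>2 / 2 \<le> (1 - t)\<^sup>2 * (norm z)\<^sup>2 / 2 + e * (t * norm z) - t * d z"
      using min[of "- (t *\<^sub>R z)"] t
      by (simp add: blinfun.minus_right blinfun.scaleR_right power_mult_distrib
          flip: scaleR_diff_left[of 1 t z, simplified])
    then have "0 \<le> t * (- (norm z)\<^sup>2 + e * norm z + t * ((norm z)\<^sup>2 / 2) - d z)"
      by (simp add: power2_eq_square field_simps)
    then show "d z \<le> - (norm z)\<^sup>2 + e * norm z + t * ((norm z)\<^sup>2 / 2)"
      using t by (simp add: zero_le_mult_iff)
  qed
  show ?thesis using dnorm dz by (simp add: power2_eq_square algebra_simps)
qed


lemma subgradient_at_ekeland_point:
  fixes f :: "'a::banach \<Rightarrow> ereal" and xs :: "'a \<Rightarrow>\<^sub>L real"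
  assumes pf: "proper_fun f" and cf: "convex_fun f" and lf: "lsc_fun f" and e: "e > 0"
    and bdd: "\<And>y. ereal c \<le> f y + ereal ((norm (y - x))\<^sup>2 / 2 - xs y)" and y0: "f y0 \<noteq> \<infinity>"
  shows "\<exists>s l. l \<in> subdiff f s
    \<and> f s + ereal ((norm (s - x))\<^sup>2 / 2 - xs s) \<le> f y0 + ereal ((norm (y0 - x))\<^sup>2 / 2 - xs y0)
    \<and> (\<forall>v. (norm (s - x))\<^sup>2 / 2 \<le> (norm (s - x + v))\<^sup>2 / 2 + e * norm v + (l - xs) v)"
proof -
  have nm: "\<And>x. f x \<noteq> - \<infinity>" using pf unfolding proper_fun_def by blast
  define D where "D = {x. f x \<noteq> \<infinity>}"
  define F where "F x = real_of_ereal (f x)" for x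
  have cF: "convex_on D F" using convex_on_finite_part[OF cf nm] unfolding D_def F_def .
  have fin: "f x = ereal (F x)" if "x \<in> D" for x using that nm[of x] unfolding D_def F_def by (cases "f x") auto
  define h where "h y = (norm (y - x))\<^sup>2 / 2 - xs y" for y
  have "continuous_on UNIV h" unfolding h_def by (intro continuous_intros blinfun.continuous_on) auto
  then have "lsc_fun (\<lambda>y. f y + ereal (h y))" by (rule lsc_fun_add_continuous[OF lf])
  then obtain s where s_le: "f s + ereal (h s) \<le> f y0 + ereal (h y0)"
    and s_min: "\<And>y. f s + ereal (h s) \<le> f y + ereal (h y) + ereal (e * dist y s)"
    using ekeland_variational_principle[of _ c y0 e] bdd y0 e unfolding h_def by fastforce
  have sD: "s \<in> D" using s_le y0 unfolding D_def by auto
  define \<Psi> where "\<Psi> w = h w + e * dist s w" for w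
  have "convex_on UNIV (\<lambda>w. ((norm (w - x))\<^sup>2 / 2 + - xs w) + e * dist s w)"
    using e by (intro convex_on_add convex_on_cmul convex_on_half_norm_sq convex_on_dist convex_on_linear)
      (auto intro: linear_compose_neg blinfun.bounded_linear_right bounded_linear.linear)
  then have \<Psi>: "convex_on UNIV \<Psi>" unfolding \<Psi>_def h_def by simp
  have bounded: "\<Psi> w \<le> (norm (s - x) + 1)\<^sup>2 / 2 + norm xs * (norm s + 1) + e" if w: "norm (w - s) \<le> 1" for w
  proof -
    have "norm (w - x) \<le> norm (s - x) + 1" using norm_triangle_ineq[of "w - s" "s - x"] w by simp
    then have "(norm (w - x))\<^sup>2 \<le> (norm (s - x) + 1)\<^sup>2" by (rule power_mono) simp
    moreover have "- xs w \<le> norm xs * (norm s + 1)"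
    proof -
      have "norm w \<le> norm s + 1" using norm_triangle_ineq[of "w - s" s] w by simp
      then show ?thesis using norm_blinfun[of xs w] abs_le_iff
        by (smt (verit) mult_left_mono norm_ge_zero real_norm_def)
    qed
    moreover have "e * dist s w \<le> e" using w e by (simp add: dist_norm norm_minus_commute)
    ultimately show ?thesis unfolding \<Psi>_def h_def by linarith
  qed
  have low: "F s + h s \<le> F u + \<Psi> u" if "u \<in> D" for u
    using s_min[of u] fin[OF sD] fin[OF that] unfolding \<Psi>_def by (simp add: dist_commute)
  obtain l :: "'a \<Rightarrow>\<^sub>L real" where l: "\<And>u w. u \<in> D \<Longrightarrow> F s + h s \<le> F u + \<Psi> w + l (w - u)"
    using convex_sandwich[OF cF \<Psi> sD bounded low] by blast
  have "f s + ereal (l (y - s)) \<le> f y" for y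
  proof (cases "y \<in> D")
    case True
    have "F s + h s \<le> F y + \<Psi> s + l (s - y)" using l[OF True] .
    moreover have "l (s - y) = - l (y - s)" by (metis blinfun.minus_right minus_diff_eq)
    ultimately show ?thesis using fin[OF True] fin[OF sD] unfolding \<Psi>_def by simp
  qed (simp add: D_def)
  then have "l \<in> subdiff f s" using subdiff_iff_subgradient[where f = f, OF nm] sD unfolding D_def by blast
  moreover have "(norm (s - x))\<^sup>2 / 2 \<le> (norm (s - x + v))\<^sup>2 / 2 + e * norm v + (l - xs) v" for v
    using l[OF sD, of "s + v"] unfolding \<Psi>_def h_def
    by (simp add: blinfun.add_right blinfun.diff_left dist_norm algebra_simps)
  ultimately show ?thesis using s_le unfolding h_def by blast
qed

lemma subdiff_quasidense_point:
  fixes f :: "'a::banach \<Rightarrow> ereal"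
  assumes pf: "proper_fun f" and cf: "convex_fun f" and lf: "lsc_fun f" and \<epsilon>: "\<epsilon> > 0"
  shows "\<exists>s l. l \<in> subdiff f s \<and> (norm (s - x))\<^sup>2 / 2 + (norm (l - xs))\<^sup>2 / 2 + (l - xs) (s - x) < \<epsilon>"
proof -
  define h where "h y = (norm (y - x))\<^sup>2 / 2 - xs y" for y
  obtain g :: "'a \<Rightarrow>\<^sub>L real" and b where gb: "\<And>y. ereal (g y + b) \<le> f y"
    using proper_convex_lsc_affine_minorant[OF pf cf lf] by blast
  define c where "c = b + (g - xs) x - (norm (g - xs))\<^sup>2"
  have coercive: "ereal (c + (norm (y - x))\<^sup>2 / 4) \<le> f y + ereal (h y)" for y
  proof -
    have "- (norm (g - xs) * norm (y - x)) \<le> (g - xs) (y - x)"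
      using norm_blinfun[of "g - xs" "y - x"] by (simp add: abs_le_iff)
    moreover have "0 \<le> (norm (y - x) / 2 - norm (g - xs))\<^sup>2" by simp
    ultimately have "c + (norm (y - x))\<^sup>2 / 4 \<le> g y + b + h y"
      unfolding c_def h_def by (simp add: blinfun.diff_left blinfun.diff_right power2_eq_square algebra_simps)
    also have "ereal (g y + b + h y) \<le> f y + ereal (h y)" using add_right_mono[OF gb[of y], of "ereal (h y)"] by simp
    finally show ?thesis by simp
  qed
  obtain y0 where y0: "f y0 \<noteq> \<infinity>" using pf unfolding proper_fun_def by blast
  then obtain A where A: "f y0 + ereal (h y0) = ereal A"
    using pf unfolding proper_fun_def by (cases "f y0") auto
  have "c + (norm (y0 - x))\<^sup>2 / 4 \<le> A" using coercive[of y0] A by simp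
  then have "c \<le> A" by (smt (verit) zero_le_power2 divide_nonneg_pos)
  define R where "R = sqrt (4 * (A - c))"
  define e where "e = min 1 (\<epsilon> / (2 * R + 1))"
  have R: "0 \<le> R" unfolding R_def using \<open>c \<le> A\<close> by simp
  have e: "0 < e" "e \<le> 1" "e * (2 * R + 1) \<le> \<epsilon>"
  proof -
    show "0 < e" "e \<le> 1" unfolding e_def using \<epsilon> R by auto
    have "e \<le> \<epsilon> / (2 * R + 1)" unfolding e_def by simp
    then show "e * (2 * R + 1) \<le> \<epsilon>" using R by (simp add: pos_le_divide_eq)
  qed
  have "ereal c \<le> f y + ereal ((norm (y - x))\<^sup>2 / 2 - xs y)" for y
    using order_trans[OF _ coercive[of y]] unfolding h_def by simp
  then obtain s l where l: "l \<in> subdiff f s" and s_le: "f s + ereal (h s) \<le> ereal A"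
    and min: "\<And>v. (norm (s - x))\<^sup>2 / 2 \<le> (norm (s - x + v))\<^sup>2 / 2 + e * norm v + (l - xs) v"
    using subgradient_at_ekeland_point[OF pf cf lf e(1) _ y0] A unfolding h_def by metis
  have "(norm (s - x))\<^sup>2 \<le> 4 * (A - c)" using order_trans[OF coercive[of s] s_le] by simp
  then have "norm (s - x) \<le> R" unfolding R_def using real_le_rsqrt by blast
  have "(norm (s - x))\<^sup>2 / 2 + (norm (l - xs))\<^sup>2 / 2 + (l - xs) (s - x) \<le> 2 * e * norm (s - x) + e\<^sup>2 / 2"
    using quadratic_perturbation_estimate[OF min] e by simp
  also have "\<dots> \<le> 2 * e * R + e / 2"
    using \<open>norm (s - x) \<le> R\<close> e by (intro add_mono) (auto simp: power2_eq_square mult_le_cancel_left1)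
  also have "\<dots> < \<epsilon>" using e by (simp add: algebra_simps)
  finally show ?thesis using l by blast
qed

lemma quasidense_mfI:
  fixes S :: "'a::real_normed_vector \<Rightarrow> ('a \<Rightarrow>\<^sub>L real) set"
  assumes "\<And>x xs \<epsilon>. \<epsilon> > 0 \<Longrightarrow> \<exists>s l. l \<in> S s \<and> (norm (s - x))\<^sup>2 / 2 + (norm (l - xs))\<^sup>2 / 2 + (l - xs) (s - x) < \<epsilon>"
  shows "quasidense_mf S"
  unfolding quasidense_mf_def
proof (intro allI)
  fix x :: 'a and xs :: "'a \<Rightarrow>\<^sub>L real"
  show "(INF p\<in>graph_mf S. ereal ((norm (fst p - x))\<^sup>2 / 2 + (norm (snd p - xs))\<^sup>2 / 2 + (snd p - xs) (fst p - x))) \<le> 0"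
    unfolding INF_le_iff
  proof (intro allI impI)
    fix y :: ereal assume "0 < y"
    then obtain \<epsilon> where \<epsilon>: "0 < \<epsilon>" "ereal \<epsilon> < y" using ereal_dense2 by (metis ereal_less(2))
    then obtain s l where "l \<in> S s" and "(norm (s - x))\<^sup>2 / 2 + (norm (l - xs))\<^sup>2 / 2 + (l - xs) (s - x) < \<epsilon>"
      using assms by blast
    then have "(s, l) \<in> graph_mf S"
      and "ereal ((norm (s - x))\<^sup>2 / 2 + (norm (l - xs))\<^sup>2 / 2 + (l - xs) (s - x)) < y"
      using \<epsilon>(2) by (auto simp: graph_mf_def intro: less_trans[OF _ \<epsilon>(2)])
    then show "\<exists>p\<in>graph_mf S. ereal ((norm (fst p - x))\<^sup>2 / 2 + (norm (snd p - xs))\<^sup>2 / 2 + (snd p - xs) (fst p - x)) < y"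
      by force
  qed
qed

theorem theorem2p14:
  fixes f :: "'a::banach \<Rightarrow> ereal"
  assumes "\<exists>x::'a. x \<noteq> 0"
    and "proper_fun f" and "convex_fun f" and "lsc_fun f"
  shows "closed_mf (subdiff f) \<and> monotone_mf (subdiff f) \<and> quasidense_mf (subdiff f)"
proof -
  have nm: "\<And>x. f x \<noteq> - \<infinity>" using assms(2) unfolding proper_fun_def by blast
  have "quasidense_mf (subdiff f)"
    by (rule quasidense_mfI) (rule subdiff_quasidense_point[OF assms(2-4)])
  then show ?thesis
    using subdiff_closed[where f = f, OF nm assms(4)] subdiff_monotone[where f = f, OF nm] by blast
qed

end
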